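(* Let $(X,T)$ be a dynamical system (a compact metrizable space $X$ with a homeomorphism $T$) which satisfies partial specification with periods $\mathcal{P}$ for some $\mathcal{P}\subseteq\mathbb{N}$ with bounded gaps. Then $(X,T)$ satisfies partial shadowing.
   Context: Fix a compatible metric $d_X$ (both properties are independent of this choice). Partial specification with periods $\mathcal{P}$: for every $\varepsilon>0$ there exist $N,M\in\mathbb{N}$ such that for every $M$-spaced specification $\{(x_i;a_i,b_i)\}_{i=1}^r$ (i.e. $x_i\in X$, integers $0\le a_1<b_1<\cdots<a_r<b_r$ with $a_{i+1}-b_i\ge M$) and every $n\in\mathcal{P}$ with $n\ge\max\{N,(1+\varepsilon)b_r\}$ there is $y\in X$ with $T^ny=y$ such that $|\{a_i\le m<b_i:d_X(T^mx_i,T^my)<\varepsilon\}|>(1-\varepsilon)(b_i-a_i)$ for every $i$. A finite sequence $(x_n)_{n=1}^N$ is $\varepsilon$-partially traced by $y$ if $|\{1\le n\le N: d_X(x_n,T^ny)<\varepsilon\}|>(1-\varepsilon)N$. It is a $\delta$-partial pseudo-orbit if $N=1$, or $N\ge2$ and $|\{1\le n\le N-1: d_X(Tx_n,x_{n+1})<\delta\}|>(1-\delta)(N-1)$. $(X,T)$ satisfies partial shadowing if for every $\varepsilon>0$ there exists $\delta>0$ such that every $\delta$-partial pseudo-orbit is $\varepsilon$-partially traced by some point of $X$. *)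

theory Defs
  imports "HOL-Analysis.Analysis"
begin

definition dyn_sys :: "'a::metric_space set \<Rightarrow> ('a \<Rightarrow> 'a) \<Rightarrow> bool" where
  "dyn_sys X T \<longleftrightarrow> compact X \<and> homeomorphism X X T (inv_into X T) \<and> T ` X = X"

definition bounded_gaps :: "nat set \<Rightarrow> bool" where
  "bounded_gaps P \<longleftrightarrow> (\<exists>K. \<forall>n. \<exists>p\<in>P. n \<le> p \<and> p < n + K)"

definition partial_specification ::
  "'a::metric_space set \<Rightarrow> ('a \<Rightarrow> 'a) \<Rightarrow> nat set \<Rightarrow> bool" where
  "partial_specification X T P \<longleftrightarrow>
    (\<forall>\<epsilon>>0. \<exists>N M::nat.
      \<forall>(r::nat) (x::nat \<Rightarrow> 'a) (a::nat \<Rightarrow> nat) (b::nat \<Rightarrow> nat) (n::nat).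
        r \<ge> 1 \<and> (\<forall>i<r. x i \<in> X) \<and> (\<forall>i<r. a i < b i)
        \<and> (\<forall>i. Suc i < r \<longrightarrow> b i < a (Suc i) \<and> a (Suc i) - b i \<ge> M)
        \<and> n \<in> P \<and> n \<ge> N \<and> real n \<ge> (1 + \<epsilon>) * real (b (r - 1))
        \<longrightarrow> (\<exists>y\<in>X. (T ^^ n) y = y \<and>
              (\<forall>i<r. real (card {m. a i \<le> m \<and> m < b i \<and>
                                    dist ((T ^^ m) (x i)) ((T ^^ m) y) < \<epsilon>})
                     > (1 - \<epsilon>) * real (b i - a i))))"

definition partial_pseudo_orbit ::
  "('a::metric_space \<Rightarrow> 'a) \<Rightarrow> real \<Rightarrow> (nat \<Rightarrow> 'a) \<Rightarrow> nat \<Rightarrow> bool" where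
  "partial_pseudo_orbit T \<delta> x N \<longleftrightarrow>
     N = 1 \<or> (N \<ge> 2 \<and> real (card {n. 1 \<le> n \<and> n \<le> N - 1 \<and> dist (T (x n)) (x (Suc n)) < \<delta>})
                        > (1 - \<delta>) * real (N - 1))"

definition partially_traced ::
  "('a::metric_space \<Rightarrow> 'a) \<Rightarrow> real \<Rightarrow> (nat \<Rightarrow> 'a) \<Rightarrow> nat \<Rightarrow> 'a \<Rightarrow> bool" where
  "partially_traced T \<epsilon> x N y \<longleftrightarrow>
     real (card {n. 1 \<le> n \<and> n \<le> N \<and> dist (x n) ((T ^^ n) y) < \<epsilon>}) > (1 - \<epsilon>) * real N"

definition partial_shadowing :: "'a::metric_space set \<Rightarrow> ('a \<Rightarrow> 'a) \<Rightarrow> bool" where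
  "partial_shadowing X T \<longleftrightarrow>
    (\<forall>\<epsilon>>0. \<exists>\<delta>>0. \<forall>(N::nat) (x::nat \<Rightarrow> 'a).
       N \<ge> 1 \<and> (\<forall>n\<in>{1..N}. x n \<in> X) \<and> partial_pseudo_orbit T \<delta> x N
       \<longrightarrow> (\<exists>y\<in>X. partially_traced T \<epsilon> x N y))"

end

theory Submission
  imports Defs
begin

(* Given \<epsilon>, put \<eta> = min \<epsilon> 1 / 4 and let M be
   the gap that partial specification provides for \<eta>. Cut time into blocks of length L \<ge> (M + 1) / \<eta>
   separated by gaps of length M + 1. By uniform continuity, every sufficiently fine chain of length
   at most L stays \<eta>-close to the orbit of its starting point, and a partial \<delta>-pseudo-orbit of length N
   has fewer than \<delta> N bad steps. A short pseudo-orbit therefore has no bad step and is traced by a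
   preimage of its first point. For a long one, specification yields a single point that \<eta>-partially
   traces the orbits of the block starting points; on every block free of bad steps these orbits are
   \<eta>-close to the pseudo-orbit, and the remaining times make up at most 4 \<eta> N of the N times. *)

lemma funpow_image_subset: "T ` X \<subseteq> X \<Longrightarrow> (T ^^ n) ` X \<subseteq> X"
  by (induction n) (auto simp: image_subset_iff)

lemma funpow_image_eq:
  assumes "T ` X = X"
  shows "(T ^^ n) ` X = X"
proof (induction n)
  case (Suc n)
  have "(T ^^ Suc n) ` X = T ` (T ^^ n) ` X"
    by (simp add: image_image)
  then show ?case
    using Suc assms by simp
qed simp

lemma bounded_gaps_imp_infinite: "bounded_gaps P \<Longrightarrow> infinite P"
  unfolding bounded_gaps_def infinite_nat_iff_unbounded_le by blast

lemma partially_tracedI: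
  assumes "(1 - \<epsilon>) * real N < real (card {n. 1 \<le> n \<and> n \<le> N \<and> dist (x n) ((T ^^ n) y) < \<epsilon>'})"
    and "\<epsilon>' \<le> \<epsilon>"
  shows "partially_traced T \<epsilon> x N y"
proof -
  have "card {n. 1 \<le> n \<and> n \<le> N \<and> dist (x n) ((T ^^ n) y) < \<epsilon>'}
      \<le> card {n. 1 \<le> n \<and> n \<le> N \<and> dist (x n) ((T ^^ n) y) < \<epsilon>}"
    using assms(2) by (intro card_mono) auto
  then show ?thesis
    using assms(1) unfolding partially_traced_def by linarith
qed

definition bad_steps :: "('a::metric_space \<Rightarrow> 'a) \<Rightarrow> real \<Rightarrow> (nat \<Rightarrow> 'a) \<Rightarrow> nat \<Rightarrow> nat set" where
  "bad_steps T \<delta> x N = {n. 1 \<le> n \<and> n < N \<and> \<delta> \<le> dist (T (x n)) (x (Suc n))}"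

lemma finite_bad_steps: "finite (bad_steps T \<delta> x N)"
  unfolding bad_steps_def by simp

lemma partial_pseudo_orbit_card_bad_steps:
  assumes "partial_pseudo_orbit T \<delta> x N"
  shows "real (card (bad_steps T \<delta> x N)) \<le> \<delta> * real (N - 1)"
proof (cases "N \<ge> 2")
  case True
  define good where "good = {n. 1 \<le> n \<and> n \<le> N - 1 \<and> dist (T (x n)) (x (Suc n)) < \<delta>}"
  have "good \<union> bad_steps T \<delta> x N = {1..N - 1}" "good \<inter> bad_steps T \<delta> x N = {}"
    unfolding good_def bad_steps_def by auto
  then have "real (card good) + real (card (bad_steps T \<delta> x N)) = real (N - 1)"
    by (metis card_Un_disjoint card_atLeastAtMost diff_Suc_1 finite_Un finite_atLeastAtMost
        of_nat_add)
  moreover have "real (card good) > (1 - \<delta>) * real (N - 1)"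
    using assms True unfolding partial_pseudo_orbit_def good_def by auto
  moreover have "(1 - \<delta>) * real (N - 1) = real (N - 1) - \<delta> * real (N - 1)"
    by (simp only: left_diff_distrib mult_1)
  ultimately show ?thesis
    by linarith
next
  case False
  then have "bad_steps T \<delta> x N = {}"
    unfolding bad_steps_def by auto
  then show ?thesis
    using assms False unfolding partial_pseudo_orbit_def by simp
qed

definition chains_traced :: "'a::metric_space set \<Rightarrow> ('a \<Rightarrow> 'a) \<Rightarrow> nat \<Rightarrow> real \<Rightarrow> real \<Rightarrow> bool" where
  "chains_traced X T L \<delta> \<eta> \<longleftrightarrow>
    (\<forall>z k. k \<le> L \<longrightarrow> (\<forall>j\<le>k. z j \<in> X) \<longrightarrow> (\<forall>j<k. dist (T (z j)) (z (Suc j)) < \<delta>)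
       \<longrightarrow> dist ((T ^^ k) (z 0)) (z k) < \<eta>)"

lemma chains_traced_mono:
  assumes "chains_traced X T L' \<delta>' \<eta>" "L \<le> L'" "\<delta> \<le> \<delta>'"
  shows "chains_traced X T L \<delta> \<eta>"
  unfolding chains_traced_def
proof (intro allI impI)
  fix z k
  assume "k \<le> L" "\<forall>j\<le>k. z j \<in> X" and steps: "\<forall>j<k. dist (T (z j)) (z (Suc j)) < \<delta>"
  moreover have "k \<le> L'"
    using \<open>k \<le> L\<close> assms(2) by simp
  moreover have "\<forall>j<k. dist (T (z j)) (z (Suc j)) < \<delta>'"
    using steps assms(3) by fastforce
  ultimately show "dist ((T ^^ k) (z 0)) (z k) < \<eta>"
    using assms(1) unfolding chains_traced_def by blast
qed

lemma chains_traced_segment: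
  assumes "chains_traced X T L \<delta> \<eta>" "a \<le> m" "m \<le> a + L"
    and "\<And>n. a \<le> n \<Longrightarrow> n \<le> m \<Longrightarrow> x n \<in> X"
    and "\<And>n. a \<le> n \<Longrightarrow> n < m \<Longrightarrow> dist (T (x n)) (x (Suc n)) < \<delta>"
  shows "dist ((T ^^ (m - a)) (x a)) (x m) < \<eta>"
proof -
  have "dist ((T ^^ (m - a)) (x (a + 0))) (x (a + (m - a))) < \<eta>"
    using assms(1)[unfolded chains_traced_def, rule_format, where z="\<lambda>j. x (a + j)" and k="m - a"]
      assms(2-) by auto
  then show ?thesis
    using assms(2) by simp
qed

lemma uniformly_continuous_chains_traced:
  fixes T :: "'a::metric_space \<Rightarrow> 'a"
  assumes uc: "uniformly_continuous_on X T" and into: "T ` X \<subseteq> X" and "\<eta> > 0"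
  shows "\<exists>\<delta>>0. chains_traced X T L \<delta> \<eta>"
  using \<open>\<eta> > 0\<close>
proof (induction L arbitrary: \<eta>)
  case 0
  then show ?case
    unfolding chains_traced_def by (intro exI[of _ 1]) auto
next
  case (Suc L)
  obtain \<rho> where \<rho>: "\<rho> > 0"
    and T_close: "\<And>u v. u \<in> X \<Longrightarrow> v \<in> X \<Longrightarrow> dist u v < \<rho> \<Longrightarrow> dist (T u) (T v) < \<eta> / 2"
    using uc Suc.prems unfolding uniformly_continuous_on_def by (metis half_gt_zero)
  obtain \<delta> where \<delta>: "\<delta> > 0" "chains_traced X T L \<delta> (min \<rho> \<eta>)"
    using Suc.IH[of "min \<rho> \<eta>"] \<rho> Suc.prems by auto
  have "chains_traced X T (Suc L) (min \<delta> (\<eta> / 2)) \<eta>"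
    unfolding chains_traced_def
  proof (intro allI impI)
    fix z k
    assume k: "k \<le> Suc L" and z: "\<forall>j\<le>k. z j \<in> X"
      and steps: "\<forall>j<k. dist (T (z j)) (z (Suc j)) < min \<delta> (\<eta> / 2)"
    show "dist ((T ^^ k) (z 0)) (z k) < \<eta>"
    proof (cases "k \<le> L")
      case True
      then show ?thesis
        using \<delta>(2) z steps unfolding chains_traced_def by fastforce
    next
      case False
      then have k_eq: "k = Suc L"
        using k by simp
      have "dist ((T ^^ L) (z 0)) (z L) < \<rho>"
        using \<delta>(2) z steps k_eq unfolding chains_traced_def by fastforce
      moreover have "(T ^^ L) (z 0) \<in> X" "z L \<in> X"
        using z k_eq funpow_image_subset[OF into] by auto
      ultimately have "dist (T ((T ^^ L) (z 0))) (T (z L)) < \<eta> / 2"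
        using T_close by blast
      moreover have "dist (T (z L)) (z k) < \<eta> / 2"
        using steps k_eq by auto
      ultimately show ?thesis
        using dist_triangle[of "(T ^^ k) (z 0)" "z k" "T (z L)"] k_eq by simp
    qed
  qed
  then show ?case
    using \<delta>(1) Suc.prems by (intro exI[of _ "min \<delta> (\<eta> / 2)"]) auto
qed

text \<open>Partial specification without the periodicity requirement, the \<open>i\<close>-th orbit segment
  being that of \<open>p i\<close> shifted to start at time \<open>a i\<close>.\<close>
definition partially_specifiable :: "'a::metric_space set \<Rightarrow> ('a \<Rightarrow> 'a) \<Rightarrow> nat \<Rightarrow> real \<Rightarrow> bool" where
  "partially_specifiable X T M \<eta> \<longleftrightarrow>
    (\<forall>(r::nat) (p::nat \<Rightarrow> 'a) (a::nat \<Rightarrow> nat) (b::nat \<Rightarrow> nat).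
      r \<ge> 1 \<and> (\<forall>i<r. p i \<in> X) \<and> (\<forall>i<r. a i < b i)
      \<and> (\<forall>i. Suc i < r \<longrightarrow> b i < a (Suc i) \<and> a (Suc i) - b i \<ge> M)
      \<longrightarrow> (\<exists>y\<in>X. \<forall>i<r. real (card {m. a i \<le> m \<and> m < b i \<and>
                                  dist ((T ^^ (m - a i)) (p i)) ((T ^^ m) y) < \<eta>})
                       > (1 - \<eta>) * real (b i - a i)))"

lemma partial_specification_imp_partially_specifiable:
  assumes spec: "partial_specification X T P" and "infinite P" and onto: "T ` X = X"
    and "\<eta> > 0"
  obtains M where "partially_specifiable X T M \<eta>"
proof -
  obtain N0 M where spec_\<eta>: "\<forall>(r::nat) (x::nat \<Rightarrow> 'a) (a::nat \<Rightarrow> nat) (b::nat \<Rightarrow> nat) (n::nat).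
      r \<ge> 1 \<and> (\<forall>i<r. x i \<in> X) \<and> (\<forall>i<r. a i < b i)
      \<and> (\<forall>i. Suc i < r \<longrightarrow> b i < a (Suc i) \<and> a (Suc i) - b i \<ge> M)
      \<and> n \<in> P \<and> n \<ge> N0 \<and> real n \<ge> (1 + \<eta>) * real (b (r - 1))
      \<longrightarrow> (\<exists>y\<in>X. (T ^^ n) y = y \<and>
            (\<forall>i<r. real (card {m. a i \<le> m \<and> m < b i \<and> dist ((T ^^ m) (x i)) ((T ^^ m) y) < \<eta>})
                   > (1 - \<eta>) * real (b i - a i)))"
    using spec[unfolded partial_specification_def, rule_format, OF \<open>\<eta> > 0\<close>] by blast
  have "partially_specifiable X T M \<eta>"
    unfolding partially_specifiable_def
  proof (intro allI impI)
    fix r p a b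
    assume segments: "1 \<le> r \<and> (\<forall>i<r. p i \<in> X) \<and> (\<forall>i<r. a i < b i)
      \<and> (\<forall>i. Suc i < r \<longrightarrow> b i < a (Suc i) \<and> M \<le> a (Suc i) - b i)"
    obtain n where n: "n \<in> P" "N0 + nat \<lceil>(1 + \<eta>) * real (b (r - 1))\<rceil> \<le> n"
      using \<open>infinite P\<close> unfolding infinite_nat_iff_unbounded_le by blast
    have "\<exists>z. i < r \<longrightarrow> z \<in> X \<and> (T ^^ a i) z = p i" for i
    proof (cases "i < r")
      case True
      then have "p i \<in> (T ^^ a i) ` X"
        using segments funpow_image_eq[OF onto] by simp
      then obtain z where "p i = (T ^^ a i) z" "z \<in> X"
        by (rule imageE)
      then show ?thesis
        by auto
    qed simp
    then obtain x0 where x0: "\<And>i. i < r \<Longrightarrow> x0 i \<in> X" "\<And>i. i < r \<Longrightarrow> (T ^^ a i) (x0 i) = p i"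
      by metis
    have orbit: "(T ^^ m) (x0 i) = (T ^^ (m - a i)) (p i)" if "i < r" "a i \<le> m" for i m
    proof -
      have "(T ^^ m) (x0 i) = (T ^^ (m - a i + a i)) (x0 i)"
        using that(2) by simp
      also have "\<dots> = (T ^^ (m - a i)) ((T ^^ a i) (x0 i))"
        by (simp add: funpow_add)
      finally show ?thesis
        using x0(2)[OF that(1)] by simp
    qed
    have "real n \<ge> (1 + \<eta>) * real (b (r - 1))"
      using n(2) by linarith
    then have hyps_spec: "1 \<le> r \<and> (\<forall>i<r. x0 i \<in> X) \<and> (\<forall>i<r. a i < b i)
      \<and> (\<forall>i. Suc i < r \<longrightarrow> b i < a (Suc i) \<and> a (Suc i) - b i \<ge> M)
      \<and> n \<in> P \<and> n \<ge> N0 \<and> real n \<ge> (1 + \<eta>) * real (b (r - 1))"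
      using segments x0(1) n by auto
    then obtain y where "y \<in> X" and y: "\<forall>i<r. real (card {m. a i \<le> m \<and> m < b i \<and>
        dist ((T ^^ m) (x0 i)) ((T ^^ m) y) < \<eta>}) > (1 - \<eta>) * real (b i - a i)"
      using spec_\<eta>[rule_format, OF hyps_spec] by blast
    moreover have "{m. a i \<le> m \<and> m < b i \<and> dist ((T ^^ m) (x0 i)) ((T ^^ m) y) < \<eta>}
        = {m. a i \<le> m \<and> m < b i \<and> dist ((T ^^ (m - a i)) (p i)) ((T ^^ m) y) < \<eta>}" if "i < r" for i
      using orbit[OF that] by auto
    ultimately show "\<exists>y\<in>X. \<forall>i<r. real (card {m. a i \<le> m \<and> m < b i \<and>
        dist ((T ^^ (m - a i)) (p i)) ((T ^^ m) y) < \<eta>}) > (1 - \<eta>) * real (b i - a i)"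
      by auto
  qed
  then show ?thesis
    using that by blast
qed

lemma partially_specifiable_equally_spaced:
  assumes spec: "partially_specifiable X T M \<eta>" and "1 \<le> J" and "0 < L"
    and p: "\<And>i. i < J \<Longrightarrow> p i \<in> X" and a: "\<And>i. a (Suc i) = a i + (L + M + 1)"
  obtains y where "y \<in> X"
    and "\<And>i. i < J \<Longrightarrow> (1 - \<eta>) * real L < real (card {m. a i \<le> m \<and> m < a i + L \<and>
                               dist ((T ^^ (m - a i)) (p i)) ((T ^^ m) y) < \<eta>})"
proof -
  have segments: "1 \<le> J \<and> (\<forall>i<J. p i \<in> X) \<and> (\<forall>i<J. a i < a i + L)
      \<and> (\<forall>i. Suc i < J \<longrightarrow> a i + L < a (Suc i) \<and> a (Suc i) - (a i + L) \<ge> M)"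
    using assms by simp
  then obtain y where "y \<in> X" "\<forall>i<J. (1 - \<eta>) * real (a i + L - a i) < real (card {m. a i \<le> m \<and>
      m < a i + L \<and> dist ((T ^^ (m - a i)) (p i)) ((T ^^ m) y) < \<eta>})"
    using spec[unfolded partially_specifiable_def, rule_format, OF segments] by blast
  then show ?thesis
    using that by simp
qed

lemma disjoint_family_card_mult_le:
  assumes "finite S" "finite G" "\<And>i. i \<in> G \<Longrightarrow> A i \<subseteq> S" "disjoint_family_on A G"
    and "\<And>i. i \<in> G \<Longrightarrow> c \<le> real (card (A i))"
  shows "real (card G) * c \<le> real (card S)"
proof -
  have "real (card G) * c = (\<Sum>i\<in>G. c)"
    by simp
  also have "\<dots> \<le> (\<Sum>i\<in>G. real (card (A i)))"
    using assms(5) by (rule sum_mono)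
  also have "\<dots> = real (card (\<Union>i\<in>G. A i))"
    using card_UN_disjoint'[OF assms(4)] assms(1-3) finite_subset by (metis of_nat_sum)
  also have "\<dots> \<le> real (card S)"
    using assms(1,3) by (simp add: card_mono UN_least)
  finally show ?thesis .
qed

text \<open>Block \<open>i\<close> is the set of times \<open>1 + i * B \<le> n < 1 + (i + 1) * B\<close>.\<close>
definition good_blocks :: "nat \<Rightarrow> nat \<Rightarrow> nat set \<Rightarrow> nat set" where
  "good_blocks B J S = {i. i < J \<and> (\<forall>n\<in>S. (n - 1) div B \<noteq> i)}"

lemma card_good_blocks:
  assumes "finite S"
  shows "J \<le> card (good_blocks B J S) + card S"
proof -
  have "J = card {..<J}"
    by simp
  also have "\<dots> \<le> card (good_blocks B J S \<union> (\<lambda>n. (n - 1) div B) ` S)"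
    using assms by (intro card_mono) (auto simp: good_blocks_def)
  also have "\<dots> \<le> card (good_blocks B J S) + card ((\<lambda>n. (n - 1) div B) ` S)"
    by (rule card_Un_le)
  also have "\<dots> \<le> card (good_blocks B J S) + card S"
    using card_image_le[OF assms] by simp
  finally show ?thesis .
qed

lemma block_end_le:
  fixes i N B :: nat
  assumes "i < N div B"
  shows "1 + i * B + B \<le> N + 1"
proof -
  from assms have "(i + 1) * B \<le> N div B * B"
    by (intro mult_le_mono1) simp
  also have "\<dots> \<le> N"
    by (rule div_times_less_eq_dividend)
  finally show ?thesis
    by simp
qed

lemma block_index_eq:
  fixes i m B :: nat
  shows "1 + i * B \<le> m \<Longrightarrow> m < 1 + i * B + B \<Longrightarrow> (m - 1) div B = i"
  by (intro div_nat_eqI) (auto simp: algebra_simps)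

text \<open>The four losses of \<open>\<eta> * N\<close> each: blocks containing a bad step, the gaps, the untraced
  times inside good blocks, and the incomplete last block (\<open>2 * L < \<eta> * N\<close>).\<close>
lemma block_count_arith:
  fixes traced good bad J N L gap \<eta> :: real
  assumes traced: "good * ((1 - \<eta>) * L) \<le> traced" and good: "J - bad \<le> good"
    and bad: "bad * L \<le> \<eta> * N" and fit: "J * (L + gap) \<le> N" and cover: "N < (J + 1) * (L + gap)"
    and gap: "gap \<le> \<eta> * L" and long: "2 * L < \<eta> * N"
    and "0 \<le> \<eta>" "\<eta> \<le> 1" "0 \<le> L" "0 \<le> gap" "0 \<le> bad" "0 \<le> J"
  shows "(1 - 4 * \<eta>) * N < traced"
proof -
  have "(J - bad) * ((1 - \<eta>) * L) \<le> traced"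
    using traced mult_right_mono[OF good, of "(1 - \<eta>) * L"] assms(9,10) by simp
  moreover have "(J - bad) * ((1 - \<eta>) * L) = J * L - \<eta> * (J * L) - bad * L + \<eta> * (bad * L)"
    by (simp add: algebra_simps)
  moreover have "0 \<le> \<eta> * (bad * L)"
    using assms by simp
  moreover have "J * L \<le> N"
    using fit mult_nonneg_nonneg[of J gap] assms(11,13) distrib_left[of J L gap] by linarith
  then have "\<eta> * (J * L) \<le> \<eta> * N"
    using assms by (simp add: mult_left_mono)
  moreover have "J * gap \<le> \<eta> * (J * L)"
    using mult_left_mono[OF gap, of J] assms by (simp add: algebra_simps)
  moreover have "N < J * L + J * gap + L + gap"
    using cover by (simp add: algebra_simps)
  moreover have "gap \<le> L"
    using gap mult_right_mono[of \<eta> 1 L] assms by simp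
  ultimately show ?thesis
    using bad long by (simp add: algebra_simps)
qed

lemma short_partial_pseudo_orbit_traced:
  assumes onto: "T ` X = X" and "1 \<le> N" and x: "\<And>n. 1 \<le> n \<Longrightarrow> n \<le> N \<Longrightarrow> x n \<in> X"
    and ppo: "partial_pseudo_orbit T \<delta> x N" and short: "\<delta> * real (N - 1) < 1"
    and chains: "chains_traced X T (N - 1) \<delta> \<eta>" and "0 < \<eta>" "\<eta> \<le> \<epsilon>"
  shows "\<exists>y\<in>X. partially_traced T \<epsilon> x N y"
proof -
  have "card (bad_steps T \<delta> x N) = 0"
    using partial_pseudo_orbit_card_bad_steps[OF ppo] short by linarith
  then have steps: "dist (T (x n)) (x (Suc n)) < \<delta>" if "1 \<le> n" "n < N" for n
    using that finite_bad_steps[of T \<delta> x N] unfolding bad_steps_def by auto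
  \<comment> \<open>Time \<open>n\<close> of the pseudo-orbit is compared with \<open>T ^^ n\<close>, so the tracing point is a preimage of \<open>x 1\<close>.\<close>
  have "x 1 \<in> T ` X"
    using onto x[of 1] \<open>1 \<le> N\<close> by simp
  then obtain y where y: "x 1 = T y" "y \<in> X"
    by (rule imageE)
  have "dist (x n) ((T ^^ n) y) < \<eta>" if n: "1 \<le> n" "n \<le> N" for n
  proof -
    obtain k where "n = Suc k"
      using n(1) by (cases n) auto
    then have "(T ^^ n) y = (T ^^ (n - 1)) (x 1)"
      using y(1) by (simp add: funpow_swap1)
    moreover have "dist ((T ^^ (n - 1)) (x 1)) (x n) < \<eta>"
      using n x steps by (intro chains_traced_segment[OF chains]) auto
    ultimately show ?thesis
      by (simp add: dist_commute)
  qed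
  then have "{n. 1 \<le> n \<and> n \<le> N \<and> dist (x n) ((T ^^ n) y) < \<eta>} = {1..N}"
    by auto
  then have "(1 - \<epsilon>) * real N < real (card {n. 1 \<le> n \<and> n \<le> N \<and> dist (x n) ((T ^^ n) y) < \<eta>})"
    using \<open>0 < \<eta>\<close> \<open>\<eta> \<le> \<epsilon>\<close> \<open>1 \<le> N\<close> by simp
  then show ?thesis
    using y(2) \<open>\<eta> \<le> \<epsilon>\<close> partially_tracedI by blast
qed

lemma partially_specifiable_traces_good_blocks:
  assumes spec: "partially_specifiable X T M \<eta>" and chains: "chains_traced X T L \<delta> \<eta>"
    and x: "\<And>n. 1 \<le> n \<Longrightarrow> n \<le> N \<Longrightarrow> x n \<in> X"
    and "0 < L" and B: "B = L + M + 1" and "B \<le> N"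
  shows "\<exists>y\<in>X. real (card (good_blocks B (N div B) (bad_steps T \<delta> x N))) * ((1 - \<eta>) * real L)
           \<le> real (card {n. 1 \<le> n \<and> n \<le> N \<and> dist (x n) ((T ^^ n) y) < 2 * \<eta>})"
proof -
  define J where "J = N div B"
  define a where "a i = 1 + i * B" for i
  have "1 \<le> J"
    using \<open>B \<le> N\<close> B unfolding J_def by (simp add: div_greater_zero_iff Suc_le_eq)
  have block_end: "a i + B \<le> N + 1" if "i < J" for i
    using block_end_le[of i N B] that unfolding a_def J_def by simp
  have block_index: "(m - 1) div B = i" if "a i \<le> m" "m < a i + B" for i m
    using block_index_eq[of i B m] that unfolding a_def by simp
  have start_in: "x (a i) \<in> X" if "i < J" for i
    using block_end[OF that] B by (intro x) (auto simp: a_def)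
  have a_Suc: "a (Suc i) = a i + (L + M + 1)" for i
    unfolding a_def B by simp
  obtain y where "y \<in> X" and traced_blocks: "\<And>i. i < J \<Longrightarrow> (1 - \<eta>) * real L <
      real (card {m. a i \<le> m \<and> m < a i + L \<and> dist ((T ^^ (m - a i)) (x (a i))) ((T ^^ m) y) < \<eta>})"
    using partially_specifiable_equally_spaced[OF spec \<open>1 \<le> J\<close> \<open>0 < L\<close>,
        where p="\<lambda>i. x (a i)" and a=a, OF start_in a_Suc] by blast
  define A where "A i = {m. a i \<le> m \<and> m < a i + L \<and> dist ((T ^^ (m - a i)) (x (a i))) ((T ^^ m) y) < \<eta>}"
    for i
  have block_of_A: "(m - 1) div B = i" if "m \<in> A i" for m i
    using block_index[of i m] that B unfolding A_def by simp
  define G where "G = good_blocks B J (bad_steps T \<delta> x N)"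
  define traced where "traced = {n. 1 \<le> n \<and> n \<le> N \<and> dist (x n) ((T ^^ n) y) < 2 * \<eta>}"
  have "A i \<subseteq> traced" if "i \<in> G" for i
  proof
    fix m
    assume m: "m \<in> A i"
    have "i < J"
      using that unfolding G_def good_blocks_def by simp
    then have m_range: "a i \<le> m" "m < a i + L" "a i + L < N + 1"
      using m block_end[OF \<open>i < J\<close>] B unfolding A_def by auto
    have "dist (T (x n)) (x (Suc n)) < \<delta>" if "a i \<le> n" "n < m" for n
    proof -
      have "(n - 1) div B = i"
        using block_index that m_range B by simp
      then have "n \<notin> bad_steps T \<delta> x N"
        using \<open>i \<in> G\<close> unfolding G_def good_blocks_def by auto
      then show ?thesis
        using that m_range unfolding bad_steps_def a_def by auto
    qed
    then have "dist ((T ^^ (m - a i)) (x (a i))) (x m) < \<eta>"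
      using m_range x by (intro chains_traced_segment[OF chains]) (auto simp: a_def)
    moreover have "dist ((T ^^ (m - a i)) (x (a i))) ((T ^^ m) y) < \<eta>"
      using m unfolding A_def by simp
    ultimately have "dist (x m) ((T ^^ m) y) < 2 * \<eta>"
      using dist_triangle3[of "x m" "(T ^^ m) y" "(T ^^ (m - a i)) (x (a i))"] by linarith
    then show "m \<in> traced"
      using m_range unfolding traced_def a_def by auto
  qed
  moreover have "disjoint_family_on A G"
    unfolding disjoint_family_on_def by (auto dest: block_of_A)
  moreover have "(1 - \<eta>) * real L \<le> real (card (A i))" if "i \<in> G" for i
    using traced_blocks[of i] that unfolding A_def G_def good_blocks_def by simp
  ultimately have "real (card G) * ((1 - \<eta>) * real L) \<le> real (card traced)"
    by (intro disjoint_family_card_mult_le) (auto simp: traced_def G_def good_blocks_def)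
  then show ?thesis
    using \<open>y \<in> X\<close> unfolding G_def J_def traced_def by blast
qed

lemma long_partial_pseudo_orbit_traced:
  assumes spec: "partially_specifiable X T M \<eta>" and chains: "chains_traced X T L \<delta> \<eta>"
    and x: "\<And>n. 1 \<le> n \<Longrightarrow> n \<le> N \<Longrightarrow> x n \<in> X" and ppo: "partial_pseudo_orbit T \<delta> x N"
    and \<eta>: "0 < \<eta>" "\<eta> \<le> 1" "4 * \<eta> \<le> \<epsilon>" and gap: "real M + 1 \<le> \<eta> * real L"
    and \<delta>: "0 \<le> \<delta>" "\<delta> * real L \<le> \<eta>" and long: "2 * real L < \<eta> * real N"
  shows "\<exists>y\<in>X. partially_traced T \<epsilon> x N y"
proof -
  define B where "B = L + M + 1"
  define J where "J = N div B"
  define bad where "bad = bad_steps T \<delta> x N"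
  have "real M + 1 \<le> real L"
    using gap \<eta> mult_right_mono[of \<eta> 1 "real L"] by simp
  moreover have "\<eta> * real N \<le> real N"
    using \<eta> mult_right_mono[of \<eta> 1 "real N"] by simp
  ultimately have "0 < L" "B \<le> N"
    using long unfolding B_def by linarith+
  then obtain y where "y \<in> X" and traced: "real (card (good_blocks B J bad)) * ((1 - \<eta>) * real L)
      \<le> real (card {n. 1 \<le> n \<and> n \<le> N \<and> dist (x n) ((T ^^ n) y) < 2 * \<eta>})"
    using partially_specifiable_traces_good_blocks[OF spec chains, where N=N and x=x, OF x _ B_def]
    unfolding J_def bad_def by blast
  have "J \<le> card (good_blocks B J bad) + card bad"
    unfolding bad_def by (rule card_good_blocks[OF finite_bad_steps])
  then have "real J - real (card bad) \<le> real (card (good_blocks B J bad))"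
    by linarith
  moreover have "real (card bad) * real L \<le> \<eta> * real N"
  proof -
    have "real (card bad) \<le> \<delta> * real N"
      using partial_pseudo_orbit_card_bad_steps[OF ppo] \<delta>(1) mult_left_mono[of "real (N - 1)" "real N" \<delta>]
      unfolding bad_def by linarith
    then have "real (card bad) * real L \<le> (\<delta> * real L) * real N"
      using mult_right_mono[of "real (card bad)" "\<delta> * real N" "real L"] by (simp add: algebra_simps)
    also have "\<dots> \<le> \<eta> * real N"
      using \<delta>(2) by (simp add: mult_right_mono)
    finally show ?thesis .
  qed
  moreover have "real (J * B) \<le> real N"
    unfolding J_def by (intro of_nat_mono div_times_less_eq_dividend)
  then have "real J * (real L + (real M + 1)) \<le> real N"
    unfolding B_def by (simp add: algebra_simps)
  moreover have "N < (J + 1) * B"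
    using dividend_less_div_times[of B N] unfolding J_def B_def by (simp add: algebra_simps)
  then have "real N < real ((J + 1) * B)"
    by (simp only: of_nat_less_iff)
  then have "real N < (real J + 1) * (real L + (real M + 1))"
    unfolding B_def by (simp add: algebra_simps)
  ultimately have "(1 - 4 * \<eta>) * real N
      < real (card {n. 1 \<le> n \<and> n \<le> N \<and> dist (x n) ((T ^^ n) y) < 2 * \<eta>})"
    using \<eta>(1,2) by (intro block_count_arith[OF traced _ _ _ _ gap long]) auto
  moreover have "(1 - \<epsilon>) * real N \<le> (1 - 4 * \<eta>) * real N"
    using \<eta>(3) by (intro mult_right_mono) auto
  ultimately show ?thesis
    using \<open>y \<in> X\<close> \<eta>(1,3) partially_tracedI[of \<epsilon> N x T y "2 * \<eta>"] by fastforce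
qed

lemma partial_pseudo_orbit_traced:
  assumes onto: "T ` X = X" and spec: "partially_specifiable X T M \<eta>"
    and chains: "chains_traced X T (max L N1) \<delta> \<eta>"
    and \<eta>: "0 < \<eta>" "\<eta> \<le> 1" "4 * \<eta> \<le> \<epsilon>" and gap: "real M + 1 \<le> \<eta> * real L"
    and N1: "2 * real L \<le> \<eta> * real N1"
    and \<delta>: "0 < \<delta>" "\<delta> * real L \<le> \<eta>" "\<delta> * (real N1 + 1) \<le> 1"
    and "1 \<le> N" and x: "\<And>n. 1 \<le> n \<Longrightarrow> n \<le> N \<Longrightarrow> x n \<in> X" and ppo: "partial_pseudo_orbit T \<delta> x N"
  shows "\<exists>y\<in>X. partially_traced T \<epsilon> x N y"
proof (cases "N \<le> N1")
  case True
  then have "\<delta> * real (N - 1) \<le> \<delta> * real N1"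
    using \<delta>(1) by (intro mult_left_mono) auto
  then have "\<delta> * real (N - 1) < 1"
    using \<delta>(1,3) distrib_left[of \<delta> "real N1" 1] by linarith
  moreover have "chains_traced X T (N - 1) \<delta> \<eta>"
    using chains_traced_mono[OF chains] True by simp
  ultimately show ?thesis
    using short_partial_pseudo_orbit_traced[OF onto \<open>1 \<le> N\<close> x ppo] \<eta> by simp
next
  case False
  then have "2 * real L < \<eta> * real N"
    using N1 \<eta>(1) by (smt (verit) mult_strict_left_mono not_le of_nat_less_iff)
  moreover have "chains_traced X T L \<delta> \<eta>"
    using chains_traced_mono[OF chains] by simp
  ultimately show ?thesis
    using long_partial_pseudo_orbit_traced[OF spec _ x ppo \<eta> gap] \<delta>(1,2) by simp
qed

lemma le_mult_nat_ceiling_divide: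
  assumes "0 < \<eta>"
  shows "c \<le> \<eta> * real (nat \<lceil>c / \<eta>\<rceil>)"
  using real_nat_ceiling_ge[of "c / \<eta>"] assms by (simp add: pos_divide_le_eq mult.commute)

lemma partial_specification_imp_partial_shadowing:
  assumes "compact X" and "continuous_on X T" and onto: "T ` X = X"
    and "partial_specification X T P" and "infinite P"
  shows "partial_shadowing X T"
  unfolding partial_shadowing_def
proof (intro allI impI)
  fix \<epsilon> :: real
  assume "\<epsilon> > 0"
  define \<eta> where "\<eta> = min \<epsilon> 1 / 4"
  have \<eta>: "0 < \<eta>" "\<eta> \<le> 1" "4 * \<eta> \<le> \<epsilon>"
    using \<open>\<epsilon> > 0\<close> unfolding \<eta>_def by auto
  obtain M where spec: "partially_specifiable X T M \<eta>"
    using partial_specification_imp_partially_specifiable[OF assms(4,5) onto \<eta>(1)] .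
  define L where "L = nat \<lceil>(real M + 1) / \<eta>\<rceil>"
  define N1 where "N1 = nat \<lceil>2 * real L / \<eta>\<rceil>"
  have gap: "real M + 1 \<le> \<eta> * real L"
    unfolding L_def by (rule le_mult_nat_ceiling_divide[OF \<eta>(1)])
  then have "0 < L"
    using \<eta>(1) by (cases L) auto
  have N1: "2 * real L \<le> \<eta> * real N1"
    unfolding N1_def by (rule le_mult_nat_ceiling_divide[OF \<eta>(1)])
  obtain \<delta>0 where "\<delta>0 > 0" and chains: "chains_traced X T (max L N1) \<delta>0 \<eta>"
    using uniformly_continuous_chains_traced[OF compact_uniformly_continuous[OF assms(2,1)] _ \<eta>(1)]
      onto by blast
  \<comment> \<open>\<open>\<delta> * (N1 + 1) \<le> 1\<close> makes short partial pseudo-orbits genuine ones; \<open>\<delta> * L \<le> \<eta>\<close> bounds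
    the blocks containing a bad step by \<open>\<eta> * N / L\<close>.\<close>
  define \<delta> where "\<delta> = min \<delta>0 (min (\<eta> / real L) (1 / (real N1 + 1)))"
  have \<delta>: "0 < \<delta>" "\<delta> * real L \<le> \<eta>" "\<delta> * (real N1 + 1) \<le> 1"
    using \<open>\<delta>0 > 0\<close> \<eta>(1) \<open>0 < L\<close>
    by (auto simp: \<delta>_def pos_le_divide_eq[symmetric] min.coboundedI1 min.coboundedI2)
  have "chains_traced X T (max L N1) \<delta> \<eta>"
    using chains_traced_mono[OF chains] by (simp add: \<delta>_def)
  note traced = partial_pseudo_orbit_traced[OF onto spec this \<eta> gap N1 \<delta>]
  show "\<exists>\<delta>>0. \<forall>N x. 1 \<le> N \<and> (\<forall>n\<in>{1..N}. x n \<in> X) \<and> partial_pseudo_orbit T \<delta> x N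
      \<longrightarrow> (\<exists>y\<in>X. partially_traced T \<epsilon> x N y)"
  proof (intro exI[of _ \<delta>] conjI allI impI)
    fix N and x :: "nat \<Rightarrow> 'a"
    assume "1 \<le> N \<and> (\<forall>n\<in>{1..N}. x n \<in> X) \<and> partial_pseudo_orbit T \<delta> x N"
    then show "\<exists>y\<in>X. partially_traced T \<epsilon> x N y"
      using traced[of N x] by simp
  qed (rule \<delta>(1))
qed

theorem lemma4p7:
  fixes X :: "'a::metric_space set" and T :: "'a \<Rightarrow> 'a" and P :: "nat set"
  assumes "dyn_sys X T"
    and "bounded_gaps P"
    and "partial_specification X T P"
  shows "partial_shadowing X T"
proof -
  have "compact X" "continuous_on X T" "T ` X = X"
    using assms(1) homeomorphism_cont1 unfolding dyn_sys_def by blast+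
  moreover have "infinite P"
    using assms(2) by (rule bounded_gaps_imp_infinite)
  ultimately show ?thesis
    using assms(3) partial_specification_imp_partial_shadowing by blast
qed

end
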